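(* For all non-negative integers $k,t$ with $t<k$ and all $j_1,j_2\in\{1,2\}$, we have $B_t(G_k,v_{(k,j_1)})\cap B_t(G_k,v_{(0,j_2)})=\emptyset$.
   Context: The planar graphs $G_k$ are defined inductively. $G_0$ has vertex set $\{v_{(0,1)},v_{(0,2)}\}$ and the single edge $\{v_{(0,1)},v_{(0,2)}\}$. For $i\ge 1$, $G_i$ is obtained from $G_{i-1}$ by adding, for each $j\in\{1,2\}$, four new vertices $a_{(i,j)},b_{(i,j)},c_{(i,j)},v_{(i,j)}$ and the edges $\{a_{(i,j)},b_{(i,j)}\},\{b_{(i,j)},c_{(i,j)}\},\{c_{(i,j)},a_{(i,j)}\}$, $\{a_{(i,j)},v_{(i,j)}\},\{b_{(i,j)},v_{(i,j)}\},\{c_{(i,j)},v_{(i,j)}\}$, $\{a_{(i,j)},v_{(i-1,j)}\},\{b_{(i,j)},v_{(i-1,j)}\},\{c_{(i,j)},v_{(i-1,j)}\}$. For a graph $G$, a vertex $v$ and a non-negative integer $t$, $B_t(G,v)$ is the set of vertices of $G$ at shortest-path distance at most $t$ from $v$. *)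

theory Defs
  imports Main
begin

(* Vertices: V i j = v_(i,j), A i j = a_(i,j), B i j = b_(i,j), C i j = c_(i,j);
   the index j is meant to range over {1,2}. *)
datatype vtx = V nat nat | A nat nat | B nat nat | C nat nat

definition verts :: "nat \<Rightarrow> vtx set" where
  "verts k = {V 0 1, V 0 2} \<union>
     (\<Union>i\<in>{1..k}. \<Union>j\<in>{1,2::nat}. {A i j, B i j, C i j, V i j})"

fun edges :: "nat \<Rightarrow> vtx set set" where
  "edges 0 = {{V 0 1, V 0 2}}"
| "edges (Suc i) = edges i \<union>
     (\<Union>j\<in>{1,2::nat}.
        {{A (Suc i) j, B (Suc i) j}, {B (Suc i) j, C (Suc i) j}, {C (Suc i) j, A (Suc i) j},
         {A (Suc i) j, V (Suc i) j}, {B (Suc i) j, V (Suc i) j}, {C (Suc i) j, V (Suc i) j},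
         {A (Suc i) j, V i j}, {B (Suc i) j, V i j}, {C (Suc i) j, V i j}})"

definition is_walk :: "nat \<Rightarrow> vtx list \<Rightarrow> bool" where
  "is_walk k p \<longleftrightarrow> p \<noteq> [] \<and> set p \<subseteq> verts k \<and>
     (\<forall>i. Suc i < length p \<longrightarrow> {p ! i, p ! Suc i} \<in> edges k)"

definition dist_le :: "nat \<Rightarrow> vtx \<Rightarrow> vtx \<Rightarrow> nat \<Rightarrow> bool" where
  "dist_le k u w t \<longleftrightarrow>
     (\<exists>p. is_walk k p \<and> hd p = u \<and> last p = w \<and> length p - 1 \<le> t)"

definition ball :: "nat \<Rightarrow> nat \<Rightarrow> vtx \<Rightarrow> vtx set" where
  "ball k t v = {u \<in> verts k. dist_le k v u t}"

end

theory Submission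
  imports Defs
begin

(* Grade the vertices by levels: v_(i,j) lies on level 2i and a_(i,j), b_(i,j), c_(i,j) on level
   2i - 1. Adjacent vertices differ by at most one level, so a vertex within distance t of both
   v_(k,j1) (level 2k) and v_(0,j2) (level 0) would force 2k \<le> 2t. *)

fun level :: "vtx \<Rightarrow> nat" where
  "level (V i j) = 2 * i"
| "level (A i j) = 2 * i - 1"
| "level (B i j) = 2 * i - 1"
| "level (C i j) = 2 * i - 1"

lemma level_edge:
  assumes "{x, y} \<in> edges k"
  shows "level x \<le> level y + 1"
  using assms by (induction k) (auto simp: doubleton_eq_iff)

lemma level_walk_nth:
  assumes "is_walk k p" and "n < length p"
  shows "level (p ! 0) \<le> level (p ! n) + n \<and> level (p ! n) \<le> level (p ! 0) + n"
  using assms(2)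
proof (induction n)
  case 0
  then show ?case by simp
next
  case (Suc n)
  have "{p ! n, p ! Suc n} \<in> edges k"
    using assms(1) Suc.prems unfolding is_walk_def by blast
  then have "level (p ! n) \<le> level (p ! Suc n) + 1" "level (p ! Suc n) \<le> level (p ! n) + 1"
    using level_edge by (auto simp: insert_commute)
  with Suc show ?case by auto
qed

lemma level_dist_le:
  assumes "dist_le k u w t"
  shows "level u \<le> level w + t \<and> level w \<le> level u + t"
proof -
  obtain p where p: "is_walk k p" "hd p = u" "last p = w" "length p - 1 \<le> t"
    using assms unfolding dist_le_def by blast
  have "p \<noteq> []"
    using p(1) unfolding is_walk_def by blast
  then have "p ! 0 = u" "p ! (length p - 1) = w"
    using p(2,3) by (simp_all add: hd_conv_nth last_conv_nth)
  with level_walk_nth[OF p(1), of "length p - 1"] \<open>p \<noteq> []\<close> p(4) show ?thesis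
    by auto
qed

theorem lemma6p4:
  fixes k t j1 j2 :: nat
  assumes "t < k" and "j1 \<in> {1,2}" and "j2 \<in> {1,2}"
  shows "ball k t (V k j1) \<inter> ball k t (V 0 j2) = {}"
proof (rule ccontr)
  assume "ball k t (V k j1) \<inter> ball k t (V 0 j2) \<noteq> {}"
  then obtain u where "dist_le k (V k j1) u t" "dist_le k (V 0 j2) u t"
    unfolding ball_def by blast
  then have "2 * k \<le> level u + t" "level u \<le> t"
    using level_dist_le by fastforce+
  with \<open>t < k\<close> show False by linarith
qed

end
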